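(* There exist a compact $T_1$ topological space $X$ and a contractive iterated function system on $X$ whose induced Hutchinson operator $F:2^X\to 2^X$ is not a closed mapping (with $2^X$ carrying the Vietoris topology).
   Context: An iterated function system (IFS) on a space $X$ is a finite family $\mathcal{F}=\{f_1,\dots,f_m\}$ of closed mappings $X\to X$ (mappings sending closed sets to closed sets; continuity not assumed). It is contractive if for every open cover $\mathcal{U}$ of $X$ there is $n\in\mathbb{N}$ such that for every sequence $(i_1,\dots,i_n)\in\{1,\dots,m\}^n$ the set $f_{i_1}\circ\cdots\circ f_{i_n}[X]$ is contained in some element of $\mathcal{U}$. $2^X$ is the family of nonempty closed subsets of $X$ with the Vietoris topology, whose base consists of the sets $\{K\in 2^X: K\subseteq V_0,\ K\cap V_i\neq\emptyset \text{ for } 1\le i\le k\}$ for $k\in\mathbb{N}$ and open $V_0,\dots,V_k\subseteq X$. The Hutchinson operator is $F(K)=\bigcup_{i=1}^m f_i[K]$. *)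

theory Defs
  imports "HOL-Analysis.Analysis"
begin

definition IFS :: "'a topology \<Rightarrow> nat \<Rightarrow> (nat \<Rightarrow> 'a \<Rightarrow> 'a) \<Rightarrow> bool" where
  "IFS X m fs \<longleftrightarrow> m \<ge> 1 \<and> (\<forall>i<m. closed_map X X (fs i))"

definition comp_word :: "(nat \<Rightarrow> 'a \<Rightarrow> 'a) \<Rightarrow> nat list \<Rightarrow> 'a \<Rightarrow> 'a" where
  "comp_word fs is = foldr (\<lambda>i g. fs i \<circ> g) is id"

definition contractive_IFS :: "'a topology \<Rightarrow> nat \<Rightarrow> (nat \<Rightarrow> 'a \<Rightarrow> 'a) \<Rightarrow> bool" where
  "contractive_IFS X m fs \<longleftrightarrow>
     (\<forall>\<U>. (\<forall>U\<in>\<U>. openin X U) \<and> topspace X \<subseteq> \<Union>\<U> \<longrightarrow>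
        (\<exists>n::nat. \<forall>is. length is = n \<and> set is \<subseteq> {..<m} \<longrightarrow>
            (\<exists>U\<in>\<U>. comp_word fs is ` topspace X \<subseteq> U)))"

definition hyperspace :: "'a topology \<Rightarrow> 'a set set" where
  "hyperspace X = {K. closedin X K \<and> K \<noteq> {}}"

definition vietoris_base :: "'a topology \<Rightarrow> 'a set set set" where
  "vietoris_base X =
     {{K \<in> hyperspace X. K \<subseteq> V0 \<and> (\<forall>V\<in>\<V>. K \<inter> V \<noteq> {})} | V0 \<V>.
        openin X V0 \<and> finite \<V> \<and> (\<forall>V\<in>\<V>. openin X V)}"

definition vietoris :: "'a topology \<Rightarrow> 'a set topology" where
  "vietoris X = topology_generated_by (vietoris_base X)"

definition hutchinson :: "nat \<Rightarrow> (nat \<Rightarrow> 'a \<Rightarrow> 'a) \<Rightarrow> 'a set \<Rightarrow> 'a set" where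
  "hutchinson m fs K = (\<Union>i<m. fs i ` K)"

end

theory Submission
  imports Defs
begin

text \<open>Take for X the Fort space on the reals with particular point 0: a set is open if it
  omits 0 or is cofinite. Both maps fix 0, shift [1, \<infinity>) by one and send every other point x
  into [1, \<infinity>), so a long composition maps X into 0 together with a far-out tail, i.e. into
  any given neighbourhood of 0. A point x < 1, x \<noteq> 0 is split into 1 and 2 - x. Hence
  F {-(j+1)} = {j+3, 1} converges to {0, 1} in the Vietoris topology, but {0, 1} is not an image
  of F: a preimage x of 1 satisfies x < 1, and then 2 - x > 1 lies in the image too.\<close>

definition fort_topology :: "'a \<Rightarrow> 'a topology" where
  "fort_topology p = topology (\<lambda>U. p \<in> U \<longrightarrow> finite (- U))"

lemma openin_fort_topology: "openin (fort_topology p) U \<longleftrightarrow> (p \<in> U \<longrightarrow> finite (- U))"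
proof -
  have "istopology (\<lambda>U. p \<in> U \<longrightarrow> finite (- U))"
    unfolding istopology_def by (auto intro: finite_subset)
  then show ?thesis
    by (simp add: fort_topology_def)
qed

lemma topspace_fort_topology [simp]: "topspace (fort_topology p) = UNIV"
  by (metis Compl_UNIV_eq finite.emptyI openin_fort_topology openin_subset top.extremum_unique)

lemma closedin_fort_topology: "closedin (fort_topology p) S \<longleftrightarrow> (p \<notin> S \<longrightarrow> finite S)"
  by (simp add: closedin_def openin_fort_topology Compl_eq_Diff_UNIV[symmetric])

lemma compact_space_fort_topology: "compact_space (fort_topology p)"
  unfolding compact_space_def compactin_def
proof (intro conjI allI impI)
  fix \<U> assume \<U>: "(\<forall>U\<in>\<U>. openin (fort_topology p) U) \<and> topspace (fort_topology p) \<subseteq> \<Union>\<U>"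
  then obtain U where U: "U \<in> \<U>" "p \<in> U" by auto
  then have "finite (- U)" using \<U> by (simp add: openin_fort_topology)
  have "\<forall>x\<in>- U. \<exists>V\<in>\<U>. x \<in> V" using \<U> by auto
  then obtain c where "\<forall>x\<in>- U. c x \<in> \<U> \<and> x \<in> c x" by metis
  with U \<open>finite (- U)\<close> show "\<exists>\<F>. finite \<F> \<and> \<F> \<subseteq> \<U> \<and> topspace (fort_topology p) \<subseteq> \<Union>\<F>"
    by (intro exI[of _ "insert U (c ` (- U))"]) auto
qed simp

lemma t1_space_fort_topology: "t1_space (fort_topology p)"
  unfolding t1_space_def openin_fort_topology
proof (intro ballI impI)
  fix x y :: 'a assume "x \<noteq> y"
  then show "\<exists>U. (p \<in> U \<longrightarrow> finite (- U)) \<and> x \<in> U \<and> y \<notin> U"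
    by (intro exI[of _ "- {y}"]) auto
qed

lemma closed_map_fort_topology:
  assumes "f p = q"
  shows "closed_map (fort_topology p) (fort_topology q) f"
  unfolding closed_map_def closedin_fort_topology using assms by auto

lemma limitin_fort_topology_inj:
  assumes "inj x"
  shows "limitin (fort_topology p) x p sequentially"
  unfolding limitin_def openin_fort_topology
proof (intro conjI allI impI)
  fix U assume "(p \<in> U \<longrightarrow> finite (- U)) \<and> p \<in> U"
  then have "finite (x -` (- U))"
    using assms by (auto intro: finite_vimageI)
  then show "\<forall>\<^sub>F j in sequentially. x j \<in> U"
    by (simp add: cofinite_eq_sequentially[symmetric] eventually_cofinite vimage_def)
qed simp

lemma contractive_IFS_fort_topologyI:
  assumes "\<And>S. finite S \<Longrightarrow> p \<notin> S \<Longrightarrow>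
    \<exists>n. \<forall>is. length is = n \<and> set is \<subseteq> {..<m} \<longrightarrow> range (comp_word fs is) \<inter> S = {}"
  shows "contractive_IFS (fort_topology p) m fs"
  unfolding contractive_IFS_def
proof (intro allI impI)
  fix \<U> assume \<U>: "(\<forall>U\<in>\<U>. openin (fort_topology p) U) \<and> topspace (fort_topology p) \<subseteq> \<Union>\<U>"
  then obtain U where U: "U \<in> \<U>" "p \<in> U" by auto
  then have "finite (- U)" using \<U> by (simp add: openin_fort_topology)
  with assms[of "- U"] U obtain n
    where "\<forall>is. length is = n \<and> set is \<subseteq> {..<m} \<longrightarrow> range (comp_word fs is) \<inter> - U = {}"
    by auto
  with U show "\<exists>n. \<forall>is. length is = n \<and> set is \<subseteq> {..<m} \<longrightarrow>
      (\<exists>U\<in>\<U>. comp_word fs is ` topspace (fort_topology p) \<subseteq> U)"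
    by (intro exI[of _ n] allI impI bexI[OF _ U(1)]) auto
qed

lemma topspace_vietoris [simp]: "topspace (vietoris X) = hyperspace X"
proof -
  have "hyperspace X \<in> vietoris_base X"
    unfolding vietoris_base_def by (intro CollectI exI[of _ "topspace X"] exI[of _ "{}"])
      (auto simp: hyperspace_def closedin_def)
  then show ?thesis
    unfolding vietoris_def vietoris_base_def by auto
qed

lemma limitin_vietorisI:
  assumes "L \<in> hyperspace X" "\<forall>\<^sub>F x in F. K x \<in> hyperspace X"
    and upper: "\<And>V. openin X V \<Longrightarrow> L \<subseteq> V \<Longrightarrow> \<forall>\<^sub>F x in F. K x \<subseteq> V"
    and lower: "\<And>V. openin X V \<Longrightarrow> L \<inter> V \<noteq> {} \<Longrightarrow> \<forall>\<^sub>F x in F. K x \<inter> V \<noteq> {}"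
  shows "limitin (vietoris X) K L F"
  unfolding limitin_def
proof (intro conjI allI impI)
  show "L \<in> topspace (vietoris X)" using assms(1) by simp
  fix \<W> assume "openin (vietoris X) \<W> \<and> L \<in> \<W>"
  then have "generate_topology_on (vietoris_base X) \<W>" "L \<in> \<W>"
    by (auto simp: vietoris_def openin_topology_generated_by_iff)
  then show "\<forall>\<^sub>F x in F. K x \<in> \<W>"
  proof (induction rule: generate_topology_on.induct)
    case (Int \<W>1 \<W>2)
    then show ?case by (auto intro: eventually_conj)
  next
    case (UN \<K>)
    then obtain \<W> where "\<W> \<in> \<K>" "\<forall>\<^sub>F x in F. K x \<in> \<W>" by auto
    then show ?case by (auto elim: eventually_mono)
  next
    case (Basis \<W>)
    then obtain V0 \<V> where \<W>: "\<W> = {K \<in> hyperspace X. K \<subseteq> V0 \<and> (\<forall>V\<in>\<V>. K \<inter> V \<noteq> {})}"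
      and "openin X V0" "finite \<V>" "\<forall>V\<in>\<V>. openin X V"
      unfolding vietoris_base_def by blast
    with Basis.prems have "\<forall>\<^sub>F x in F. K x \<subseteq> V0" "\<forall>\<^sub>F x in F. \<forall>V\<in>\<V>. K x \<inter> V \<noteq> {}"
      by (auto intro!: upper lower eventually_ball_finite)
    with assms(2) show ?case
      unfolding \<W> by eventually_elim auto
  qed simp
qed

lemma limitin_vietoris_doubleton:
  assumes "t1_space X" "limitin X x a F" "limitin X y b F"
  shows "limitin (vietoris X) (\<lambda>j. {x j, y j}) {a, b} F"
proof (rule limitin_vietorisI)
  have "\<forall>\<^sub>F j in F. x j \<in> topspace X" "\<forall>\<^sub>F j in F. y j \<in> topspace X"
    using assms(2,3) by (blast intro: limitinD limitin_topspace openin_topspace)+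
  then show "\<forall>\<^sub>F j in F. {x j, y j} \<in> hyperspace X"
    by eventually_elim (use assms(1) in \<open>auto simp: hyperspace_def t1_space_closedin_finite\<close>)
  show "{a, b} \<in> hyperspace X"
    using assms by (auto simp: hyperspace_def t1_space_closedin_finite limitin_topspace)
next
  fix V assume "openin X V"
  then have x: "a \<in> V \<Longrightarrow> \<forall>\<^sub>F j in F. x j \<in> V" and y: "b \<in> V \<Longrightarrow> \<forall>\<^sub>F j in F. y j \<in> V"
    using assms(2,3) by (auto intro: limitinD)
  show "{a, b} \<subseteq> V \<Longrightarrow> \<forall>\<^sub>F j in F. {x j, y j} \<subseteq> V"
    using eventually_conj[OF x y] by simp
  show "{a, b} \<inter> V \<noteq> {} \<Longrightarrow> \<forall>\<^sub>F j in F. {x j, y j} \<inter> V \<noteq> {}"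
    using x y by (auto elim: eventually_mono)
qed

lemma not_closed_map_limitin:
  assumes lim: "limitin Y (\<lambda>j. f (K j)) L sequentially" and "range K \<subseteq> topspace X"
    and "L \<notin> f ` topspace X"
  shows "\<not> closed_map X Y f"
proof
  assume "closed_map X Y f"
  then have "closedin Y (f ` topspace X)"
    by (simp add: closed_map_def)
  moreover have "\<forall>\<^sub>F j in sequentially. f (K j) \<in> f ` topspace X"
    using assms(2) by (simp add: image_subset_iff)
  ultimately have "L \<in> f ` topspace X"
    using limitin_closedin[OF lim] by simp
  with assms(3) show False ..
qed

lemma hutchinson_two: "hutchinson 2 fs K = fs 0 ` K \<union> fs 1 ` K"
proof -
  have "{..<2::nat} = {0, 1}" by auto
  then show ?thesis by (auto simp: hutchinson_def)
qed

definition example_ifs :: "nat \<Rightarrow> real \<Rightarrow> real" where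
  "example_ifs i x = (if x = 0 then 0 else if 1 \<le> x then x + 1 else if i = 0 then 1 else 2 - x)"

lemma example_ifs_zero [simp]: "example_ifs i 0 = 0"
  by (simp add: example_ifs_def)

lemma example_ifs_shift: "1 \<le> x \<Longrightarrow> example_ifs i x = x + 1"
  by (simp add: example_ifs_def)

lemma example_ifs_ge_1: "x \<noteq> 0 \<Longrightarrow> 1 \<le> example_ifs i x"
  by (simp add: example_ifs_def)

lemma comp_word_example_ifs:
  "is \<noteq> [] \<Longrightarrow> comp_word example_ifs is x = 0 \<or> real (length is) \<le> comp_word example_ifs is x"
proof (induction "is")
  case (Cons i "is")
  have step: "comp_word example_ifs (i # is) x = example_ifs i (comp_word example_ifs is x)"
    by (simp add: comp_word_def)
  show ?case
  proof (cases "is = []")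
    case True
    then show ?thesis
      using step example_ifs_ge_1[of x i] by (cases "x = 0") (auto simp: comp_word_def)
  next
    case False
    then have "1 \<le> real (length is)"
      by (simp add: Suc_le_eq)
    with False Cons.IH step show ?thesis
      by (auto simp: example_ifs_shift)
  qed
qed simp

lemma contractive_IFS_example_ifs: "contractive_IFS (fort_topology 0) m example_ifs"
proof (rule contractive_IFS_fort_topologyI)
  fix S :: "real set" assume "finite S" "0 \<notin> S"
  obtain b where b: "\<forall>s\<in>S. s \<le> b"
    using bdd_above_finite[OF \<open>finite S\<close>] by (auto simp: bdd_above_def)
  obtain n where "b < real n"
    using reals_Archimedean2 by blast
  have "comp_word example_ifs is x \<notin> S" if "length is = Suc n" for "is" x
  proof
    assume "comp_word example_ifs is x \<in> S"
    with b \<open>b < real n\<close> have "comp_word example_ifs is x < real (length is)"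
      using that by fastforce
    with \<open>0 \<notin> S\<close> \<open>comp_word example_ifs is x \<in> S\<close> show False
      using comp_word_example_ifs[of "is" x] that by fastforce
  qed
  then show "\<exists>n. \<forall>is. length is = n \<and> set is \<subseteq> {..<m} \<longrightarrow> range (comp_word example_ifs is) \<inter> S = {}"
    by blast
qed

lemma hutchinson_example_ifs_singleton:
  assumes "x \<noteq> 0" "x < 1"
  shows "hutchinson 2 example_ifs {x} = {2 - x, 1}"
  using assms by (auto simp: hutchinson_two example_ifs_def)

lemma zero_one_notin_range_hutchinson: "{0, 1} \<notin> range (hutchinson 2 example_ifs)"
proof
  assume "{0, 1} \<in> range (hutchinson 2 example_ifs)"
  then obtain A where A: "hutchinson 2 example_ifs A = {0, 1}" by auto
  then have "1 \<in> hutchinson 2 example_ifs A" by simp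
  then obtain x where "x \<in> A" "x \<noteq> 0" "x < 1"
    by (auto simp: hutchinson_two example_ifs_def split: if_splits)
  then have "2 - x \<in> hutchinson 2 example_ifs A"
    using hutchinson_two[of example_ifs A] by (auto simp: example_ifs_def)
  with A \<open>x < 1\<close> show False by simp
qed

theorem theorem24:
  shows "\<exists>(X :: real topology) (m :: nat) (fs :: nat \<Rightarrow> real \<Rightarrow> real).
           compact_space X \<and> t1_space X \<and> IFS X m fs \<and> contractive_IFS X m fs \<and>
           \<not> closed_map (vietoris X) (vietoris X) (hutchinson m fs)"
proof (intro exI conjI)
  let ?X = "fort_topology (0::real)" and ?F = "hutchinson 2 example_ifs"
  show "compact_space ?X" by (rule compact_space_fort_topology)
  show "t1_space ?X" by (rule t1_space_fort_topology)
  show "IFS ?X 2 example_ifs" by (simp add: IFS_def closed_map_fort_topology)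
  show "contractive_IFS ?X 2 example_ifs" by (rule contractive_IFS_example_ifs)
  have "limitin ?X (\<lambda>j. 2 + real (Suc j)) 0 sequentially"
    by (rule limitin_fort_topology_inj) (simp add: inj_def)
  then have "limitin (vietoris ?X) (\<lambda>j. {2 + real (Suc j), 1}) {0, 1} sequentially"
    by (simp add: limitin_vietoris_doubleton t1_space_fort_topology)
  then have "limitin (vietoris ?X) (\<lambda>j. ?F {- real (Suc j)}) {0, 1} sequentially"
    by (simp add: hutchinson_example_ifs_singleton)
  then show "\<not> closed_map (vietoris ?X) (vietoris ?X) ?F"
  proof (rule not_closed_map_limitin)
    show "range (\<lambda>j. {- real (Suc j)}) \<subseteq> topspace (vietoris ?X)"
      by (auto simp: hyperspace_def closedin_fort_topology)
    show "{0, 1} \<notin> ?F ` topspace (vietoris ?X)"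
      using zero_one_notin_range_hutchinson by blast
  qed
qed

end
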